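(* Let $K$ be a positive semiring and let $R$ and $S$ be $K$-relations over finite sets of attributes $X$ and $Y$, and put $Z=X\cap Y$. Then for every $r\in R'\ltimes S'$ we have $(R\Join S)[X](r)=c^*_{S,Z}\,R(r)$.
   Context: A commutative semiring $(K,+,\cdot,0,1)$ with $0\neq 1$ is positive if $a+b=0$ implies $a=b=0$, and $ab=0$ implies $a=0$ or $b=0$. Each attribute $A$ has a domain $\mathrm{Dom}(A)$. For a finite set of attributes $X$, $\mathrm{Tup}(X)$ is the set of maps assigning to each $A\in X$ an element of $\mathrm{Dom}(A)$; for $Y\subseteq X$, $t[Y]$ is the restriction of $t$ to $Y$; $XY$ denotes $X\cup Y$. A $K$-relation over $X$ is a map $R:\mathrm{Tup}(X)\to K$ with finite support $R'=\{t: R(t)\neq 0\}$. For $Y\subseteq X$, the marginal $R[Y]$ is the $K$-relation over $Y$ with $R[Y](u)=\sum_{r\in R',\, r[Y]=u} R(r)$. For a $K$-relation $T$ over $Y$, $Z\subseteq Y$ and $u\in\mathrm{Tup}(Z)$, set $c^*_{T,Z}=\prod_{v\in T[Z]'}T[Z](v)$ and $c_T(u)=\prod_{v\in T[Z]',\, v\neq u}T[Z](v)$ (empty products equal $1$). The join of $K$-relations $R$ over $X$ and $S$ over $Y$ is the $K$-relation over $XY$ defined by $(R\Join S)(t)=R(t[X])\,S(t[Y])\,c_S(t[X\cap Y])$, with $Z=X\cap Y$. For ordinary relations $P\subseteq\mathrm{Tup}(X)$, $Q\subseteq\mathrm{Tup}(Y)$, $P\Join Q$ is the set of $t\in\mathrm{Tup}(XY)$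 with $t[X]\in P$ and $t[Y]\in Q$, and the semijoin is $P\ltimes Q=\{t[X]: t\in P\Join Q\}$. *)

theory Defs
  imports Main
begin

definition Tup :: "('a \<Rightarrow> 'v set) \<Rightarrow> 'a set \<Rightarrow> ('a \<rightharpoonup> 'v) set" where
  "Tup Dom X = {t. dom t = X \<and> (\<forall>A\<in>X. the (t A) \<in> Dom A)}"

definition positive_semiring :: "'k::comm_semiring_1 itself \<Rightarrow> bool" where
  "positive_semiring _ \<longleftrightarrow>
     (\<forall>a b :: 'k. a + b = 0 \<longrightarrow> a = 0 \<and> b = 0) \<and>
     (\<forall>a b :: 'k. a * b = 0 \<longrightarrow> a = 0 \<or> b = 0)"

definition supp :: "(('a \<rightharpoonup> 'v) \<Rightarrow> 'k::zero) \<Rightarrow> ('a \<rightharpoonup> 'v) set" where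
  "supp R = {t. R t \<noteq> 0}"

definition is_Krel :: "('a \<Rightarrow> 'v set) \<Rightarrow> 'a set \<Rightarrow> (('a \<rightharpoonup> 'v) \<Rightarrow> 'k::zero) \<Rightarrow> bool" where
  "is_Krel Dom X R \<longleftrightarrow> finite (supp R) \<and> supp R \<subseteq> Tup Dom X"

definition marg :: "(('a \<rightharpoonup> 'v) \<Rightarrow> 'k::comm_monoid_add) \<Rightarrow> 'a set \<Rightarrow> ('a \<rightharpoonup> 'v) \<Rightarrow> 'k" where
  "marg R Y u = (\<Sum>r\<in>{r\<in>supp R. r |` Y = u}. R r)"

definition cstar :: "(('a \<rightharpoonup> 'v) \<Rightarrow> 'k::comm_semiring_1) \<Rightarrow> 'a set \<Rightarrow> 'k" where
  "cstar T Z = (\<Prod>v\<in>supp (marg T Z). marg T Z v)"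

definition cfac :: "(('a \<rightharpoonup> 'v) \<Rightarrow> 'k::comm_semiring_1) \<Rightarrow> 'a set \<Rightarrow> ('a \<rightharpoonup> 'v) \<Rightarrow> 'k" where
  "cfac T Z u = (\<Prod>v\<in>supp (marg T Z) - {u}. marg T Z v)"

definition Kjoin :: "('a \<Rightarrow> 'v set) \<Rightarrow> 'a set \<Rightarrow> 'a set \<Rightarrow> (('a \<rightharpoonup> 'v) \<Rightarrow> 'k::comm_semiring_1)
    \<Rightarrow> (('a \<rightharpoonup> 'v) \<Rightarrow> 'k) \<Rightarrow> ('a \<rightharpoonup> 'v) \<Rightarrow> 'k" where
  "Kjoin Dom X Y R S t =
     (if t \<in> Tup Dom (X \<union> Y)
      then R (t |` X) * S (t |` Y) * cfac S (X \<inter> Y) (t |` (X \<inter> Y))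
      else 0)"

definition rjoin :: "('a \<Rightarrow> 'v set) \<Rightarrow> 'a set \<Rightarrow> 'a set \<Rightarrow> ('a \<rightharpoonup> 'v) set
    \<Rightarrow> ('a \<rightharpoonup> 'v) set \<Rightarrow> ('a \<rightharpoonup> 'v) set" where
  "rjoin Dom X Y P Q = {t \<in> Tup Dom (X \<union> Y). t |` X \<in> P \<and> t |` Y \<in> Q}"

definition semijoin :: "('a \<Rightarrow> 'v set) \<Rightarrow> 'a set \<Rightarrow> 'a set \<Rightarrow> ('a \<rightharpoonup> 'v) set
    \<Rightarrow> ('a \<rightharpoonup> 'v) set \<Rightarrow> ('a \<rightharpoonup> 'v) set" where
  "semijoin Dom X Y P Q = (\<lambda>t. t |` X) ` rjoin Dom X Y P Q"

end

theory Submission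
  imports Defs
begin

text \<open>Put \<open>Z = X \<inter> Y\<close> and \<open>z = r|Z\<close>. The tuples over \<open>XY\<close> lying over \<open>r\<close> are exactly
  the \<open>r ++ s\<close> with \<open>s\<close> a tuple over \<open>Y\<close> lying over \<open>z\<close>, and on such a tuple the join takes
  the value \<open>R(r) S(s) c\<^sub>S(z)\<close>. Summing over \<open>s\<close> gives \<open>(R \<Join> S)[X](r) = R(r) c\<^sub>S(z) S[Z](z)\<close>
  for every tuple \<open>r\<close> over \<open>X\<close>. If \<open>r\<close> is in the semijoin, some \<open>s \<in> S'\<close> lies over \<open>z\<close>, so
  \<open>S[Z](z)\<close> is a sum containing a nonzero term and is nonzero because addition in \<open>K\<close> is
  zero-sum-free; then \<open>S[Z](z) c\<^sub>S(z)\<close> is the full product \<open>c*\<^sub>S\<^sub>,\<^sub>Z\<close>.\<close>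

lemma map_add_restrict_right: "dom s = Y \<Longrightarrow> (r ++ s) |` Y = s"
  by (auto simp: restrict_map_def map_add_def fun_eq_iff split: option.splits)

lemma map_add_restrict_left:
  assumes "dom r = X" "dom s = Y" "s |` (X \<inter> Y) = r |` (X \<inter> Y)"
  shows "(r ++ s) |` X = r"
proof
  fix A
  show "((r ++ s) |` X) A = r A"
  proof (cases "A \<in> X \<and> A \<in> Y")
    case True
    then have "s A = r A" using fun_cong[OF assms(3), of A] by simp
    then show ?thesis using True assms(2) by (auto simp: map_add_def split: option.splits)
  next
    case False
    then show ?thesis using assms(1,2) by (cases "A \<in> X") (auto simp: map_add_def)
  qed
qed

lemma map_add_restrict_decomp: "dom t = X \<union> Y \<Longrightarrow> t = t |` X ++ t |` Y"
  by (fastforce simp: map_add_def restrict_map_def fun_eq_iff split: option.splits)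

lemma map_add_Tup:
  assumes "r \<in> Tup Dom X" "s \<in> Tup Dom Y"
  shows "r ++ s \<in> Tup Dom (X \<union> Y)"
proof -
  have "the ((r ++ s) A) \<in> Dom A" if "A \<in> X \<union> Y" for A
    using that assms by (cases "A \<in> Y") (auto simp: Tup_def map_add_dom_app_simps)
  then show ?thesis using assms by (auto simp: Tup_def)
qed

lemma semijoinE:
  assumes "r \<in> semijoin Dom X Y P Q"
  obtains s where "r \<in> P" "s \<in> Q" "s |` (X \<inter> Y) = r |` (X \<inter> Y)"
proof -
  obtain t where "t |` X \<in> P" "t |` Y \<in> Q" "r = t |` X"
    using assms unfolding semijoin_def rjoin_def by auto
  moreover have "t |` Y |` (X \<inter> Y) = t |` X |` (X \<inter> Y)" by (simp add: Int_ac)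
  ultimately show thesis using that by simp
qed

lemma sum_eq_0_zero_sum_free:
  fixes f :: "'b \<Rightarrow> 'k::comm_monoid_add"
  assumes zero_sum_free: "\<And>a b :: 'k. a + b = 0 \<Longrightarrow> a = 0 \<and> b = 0"
    and "finite A" "sum f A = 0" "x \<in> A"
  shows "f x = 0"
  using assms(2-)
proof (induction A rule: finite_induct)
  case (insert a A)
  then show ?case using zero_sum_free[of "f a" "sum f A"] by auto
qed simp

lemma supp_marg_subset: "supp (marg T Z) \<subseteq> (\<lambda>t. t |` Z) ` supp T"
  unfolding supp_def marg_def by (auto intro: sum.neutral)

lemma marg_restrict_neq_0:
  fixes S :: "('a \<rightharpoonup> 'v) \<Rightarrow> 'k::comm_monoid_add"
  assumes zero_sum_free: "\<And>a b :: 'k. a + b = 0 \<Longrightarrow> a = 0 \<and> b = 0"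
    and "finite (supp S)" "s \<in> supp S"
  shows "marg S Z (s |` Z) \<noteq> 0"
proof
  assume "marg S Z (s |` Z) = 0"
  then have "S s = 0"
    using sum_eq_0_zero_sum_free[OF zero_sum_free, of "{t \<in> supp S. t |` Z = s |` Z}" S s] assms(2,3)
    unfolding marg_def by simp
  with \<open>s \<in> supp S\<close> show False by (simp add: supp_def)
qed

lemma cstar_split:
  assumes "finite (supp T)" "u \<in> supp (marg T Z)"
  shows "cstar T Z = marg T Z u * cfac T Z u"
proof -
  have "finite (supp (marg T Z))"
    using finite_subset[OF supp_marg_subset finite_imageI[OF assms(1)]] .
  then show ?thesis
    unfolding cstar_def cfac_def using prod.remove[OF _ assms(2)] by blast
qed

lemma Kjoin_map_add:
  assumes "r \<in> Tup Dom X" "s \<in> Tup Dom Y" "s |` (X \<inter> Y) = r |` (X \<inter> Y)"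
  shows "Kjoin Dom X Y R S (r ++ s) = R r * S s * cfac S (X \<inter> Y) (r |` (X \<inter> Y))"
proof -
  have "dom r = X" "dom s = Y" using assms(1,2) by (auto simp: Tup_def)
  then have "(r ++ s) |` X = r" "(r ++ s) |` Y = s"
    using map_add_restrict_left assms(3) map_add_restrict_right by blast+
  moreover have "(r ++ s) |` (X \<inter> Y) = r |` (X \<inter> Y)"
    using \<open>(r ++ s) |` X = r\<close> by (metis inf.cobounded1 inf.absorb_iff2 restrict_restrict)
  ultimately show ?thesis
    unfolding Kjoin_def using map_add_Tup[OF assms(1,2)] by simp
qed

lemma marg_Kjoin:
  fixes R S :: "('a \<rightharpoonup> 'v) \<Rightarrow> 'k::comm_semiring_1"
  assumes S: "is_Krel Dom Y S" and r: "r \<in> Tup Dom X"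
  defines "z \<equiv> r |` (X \<inter> Y)"
  shows "marg (Kjoin Dom X Y R S) X r = R r * cfac S (X \<inter> Y) z * marg S (X \<inter> Y) z"
proof -
  define J where "J = Kjoin Dom X Y R S"
  define B where "B = {s \<in> supp S. s |` (X \<inter> Y) = z}"
  have B_Tup: "s \<in> Tup Dom Y" and B_dom: "dom s = Y" and B_z: "s |` (X \<inter> Y) = z" if "s \<in> B" for s
    using that S unfolding B_def is_Krel_def Tup_def by auto
  have "finite B" using S unfolding B_def is_Krel_def by simp
  have inj: "inj_on (map_add r) B"
    by (rule inj_onI) (metis B_dom map_add_restrict_right)
  have fibre: "{t \<in> supp J. t |` X = r} \<subseteq> map_add r ` B"
  proof
    fix t assume "t \<in> {t \<in> supp J. t |` X = r}"
    then have "J t \<noteq> 0" and tX: "t |` X = r" by (auto simp: supp_def)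
    then have "t \<in> Tup Dom (X \<union> Y)" and "S (t |` Y) \<noteq> 0"
      unfolding J_def Kjoin_def by (auto split: if_splits)
    moreover have "t |` Y |` (X \<inter> Y) = z"
      using tX unfolding z_def by (metis Int_left_absorb inf_commute restrict_restrict)
    ultimately have "t |` Y \<in> B" and "t = r ++ t |` Y"
      using map_add_restrict_decomp[of t X Y] tX by (auto simp: B_def supp_def Tup_def)
    then show "t \<in> map_add r ` B" by blast
  qed
  have over_r: "(r ++ s) |` X = r" if "s \<in> B" for s
    using map_add_restrict_left[of r X, OF _ B_dom[OF that]] B_z[OF that] r by (simp add: Tup_def z_def)
  have "marg J X r = sum J (map_add r ` B)"
    unfolding marg_def
    by (rule sum.mono_neutral_left[OF finite_imageI[OF \<open>finite B\<close>] fibre])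
      (auto simp: supp_def over_r)
  also have "\<dots> = (\<Sum>s\<in>B. J (r ++ s))"
    by (simp add: sum.reindex[OF inj])
  also have "\<dots> = (\<Sum>s\<in>B. R r * S s * cfac S (X \<inter> Y) z)"
    using Kjoin_map_add[OF r B_Tup] B_z unfolding J_def z_def by (intro sum.cong) simp_all
  also have "\<dots> = R r * cfac S (X \<inter> Y) z * marg S (X \<inter> Y) z"
    unfolding marg_def B_def by (simp add: sum_distrib_left mult_ac)
  finally show ?thesis unfolding J_def .
qed

theorem lemma5:
  fixes Dom :: "'a \<Rightarrow> 'v set"
    and X Y :: "'a set"
    and R S :: "('a \<rightharpoonup> 'v) \<Rightarrow> 'k::comm_semiring_1"
    and r :: "'a \<rightharpoonup> 'v"
  assumes "positive_semiring TYPE('k)"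
    and "finite X" and "finite Y"
    and "is_Krel Dom X R" and "is_Krel Dom Y S"
    and "r \<in> semijoin Dom X Y (supp R) (supp S)"
  shows "marg (Kjoin Dom X Y R S) X r = cstar S (X \<inter> Y) * R r"
proof -
  define z where "z = r |` (X \<inter> Y)"
  obtain s where "r \<in> supp R" "s \<in> supp S" and s_z: "s |` (X \<inter> Y) = z"
    using assms(6) unfolding z_def by (rule semijoinE)
  have r: "r \<in> Tup Dom X" using assms(4) \<open>r \<in> supp R\<close> by (auto simp: is_Krel_def)
  have "finite (supp S)" using assms(5) by (simp add: is_Krel_def)
  have "marg S (X \<inter> Y) z \<noteq> 0"
    using marg_restrict_neq_0[OF _ \<open>finite (supp S)\<close> \<open>s \<in> supp S\<close>] assms(1) s_z
    unfolding positive_semiring_def by blast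
  then have "cstar S (X \<inter> Y) = marg S (X \<inter> Y) z * cfac S (X \<inter> Y) z"
    using cstar_split[OF \<open>finite (supp S)\<close>] by (simp add: supp_def)
  then show ?thesis
    using marg_Kjoin[OF assms(5) r, of R] unfolding z_def by (simp add: mult_ac)
qed

end
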